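(* Let $\alpha$ be a countable ordinal and let $P\in\mathbb{J}_\alpha$. If $P$ is embeddable in $[\omega]^{<\omega}$ by a map preserving finite joins, then there is a sierpinskisation $S$ of $\alpha$ and $\omega$ such that $I_{<\omega}(S)\in\mathbb{J}_\alpha$ and $I_{<\omega}(S)$ is embeddable in $P$ by a map preserving finite joins.
   Context: $\mathbb{J}_\alpha$ is the class of join-semilattices $P$ with a least element such that the lattice $J(P)$ of ideals (non-empty up-directed initial segments, ordered by inclusion) of $P$ contains a chain of order type $I(\alpha)$, the type of the chain of all initial segments of a chain of type $\alpha$. $[\omega]^{<\omega}$ is the set of finite subsets of $\mathbb{N}$ ordered by inclusion. A sierpinskisation of $\alpha$ and $\omega$ is a poset whose order is the intersection of two linear orders on its underlying set, one of type $\alpha$ and one of type $\omega$. $I_{<\omega}(S)$ is the set of finitely generated initial segments of $S$ ordered by inclusion. A map preserves finite joins if $f(\bigvee X)=\bigvee f(X)$ for every finite $X$ (including $X=\emptyset$). *)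

theory Defs
  imports Main "HOL-Library.Countable_Set"
begin

text \<open>Posets are represented as relations; the carrier is the Field.\<close>

definition ord_iso :: "'a rel \<Rightarrow> 'b rel \<Rightarrow> bool" where
  "ord_iso r s \<longleftrightarrow> (\<exists>f. bij_betw f (Field r) (Field s) \<and>
     (\<forall>a\<in>Field r. \<forall>b\<in>Field r. (a,b) \<in> r \<longleftrightarrow> (f a, f b) \<in> s))"

definition incl_rel :: "'a set set \<Rightarrow> 'a set rel" where
  "incl_rel A = {(X,Y). X \<in> A \<and> Y \<in> A \<and> X \<subseteq> Y}"

definition is_lub :: "'a rel \<Rightarrow> 'a set \<Rightarrow> 'a \<Rightarrow> bool" where
  "is_lub P X x \<longleftrightarrow> x \<in> Field P \<and> (\<forall>y\<in>X. (y,x) \<in> P) \<and>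
     (\<forall>z\<in>Field P. (\<forall>y\<in>X. (y,z) \<in> P) \<longrightarrow> (x,z) \<in> P)"

definition join_semilattice_bot :: "'a rel \<Rightarrow> bool" where
  "join_semilattice_bot P \<longleftrightarrow> Partial_order P \<and>
     (\<exists>b\<in>Field P. \<forall>x\<in>Field P. (b,x) \<in> P) \<and>
     (\<forall>x\<in>Field P. \<forall>y\<in>Field P. \<exists>z. is_lub P {x,y} z)"

definition ideals :: "'a rel \<Rightarrow> 'a set set" where
  "ideals P = {I. I \<subseteq> Field P \<and> I \<noteq> {} \<and>
     (\<forall>x\<in>I. \<forall>y. (y,x) \<in> P \<longrightarrow> y \<in> I) \<and>
     (\<forall>x\<in>I. \<forall>y\<in>I. \<exists>z\<in>I. (x,z) \<in> P \<and> (y,z) \<in> P)}"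

definition init_segs :: "'a rel \<Rightarrow> 'a set set" where
  "init_segs r = {X. X \<subseteq> Field r \<and> (\<forall>x\<in>X. \<forall>y. (y,x) \<in> r \<longrightarrow> y \<in> X)}"

text \<open>The class J_alpha, alpha given by a well-order r.\<close>
definition J_alpha :: "'a rel \<Rightarrow> 'p rel \<Rightarrow> bool" where
  "J_alpha r P \<longleftrightarrow> join_semilattice_bot P \<and>
     (\<exists>C \<subseteq> ideals P. ord_iso (incl_rel C) (incl_rel (init_segs r)))"

text \<open>Order embedding preserving finite joins (including the empty join).\<close>
definition join_emb :: "'a rel \<Rightarrow> 'b rel \<Rightarrow> ('a \<Rightarrow> 'b) \<Rightarrow> bool" where
  "join_emb P Q f \<longleftrightarrow> f ` Field P \<subseteq> Field Q \<and>
     (\<forall>x\<in>Field P. \<forall>y\<in>Field P. (x,y) \<in> P \<longleftrightarrow> (f x, f y) \<in> Q) \<and>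
     (\<forall>X x. finite X \<and> X \<subseteq> Field P \<and> is_lub P X x \<longrightarrow> is_lub Q (f ` X) (f x))"

definition fin_subsets_nat :: "nat set rel" where
  "fin_subsets_nat = incl_rel {X. finite X}"

definition omega_rel :: "nat rel" where
  "omega_rel = {(x,y). x \<le> y}"

definition sierpinskisation :: "'a rel \<Rightarrow> 's rel \<Rightarrow> bool" where
  "sierpinskisation r S \<longleftrightarrow> (\<exists>L1 L2. Linear_order L1 \<and> Linear_order L2 \<and>
     Field L1 = Field L2 \<and> S = L1 \<inter> L2 \<and> ord_iso L1 r \<and> ord_iso L2 omega_rel)"

definition fg_init_segs :: "'s rel \<Rightarrow> 's set rel" where
  "fg_init_segs S = incl_rel {{y \<in> Field S. \<exists>x\<in>F. (y,x) \<in> S} | F. finite F \<and> F \<subseteq> Field S}"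

end

theory Submission
  imports Defs "HOL-Library.Nat_Bijection"
begin

text \<open>
  The chain of ideals of \<open>P\<close> indexed by the initial segments of \<open>r\<close> yields, for every \<open>a\<close>, an
  element \<open>y a\<close> of the ideal indexed by the closed segment below \<open>a\<close> that is not in the ideal
  indexed by the open one; as \<open>P\<close> embeds into the finite subsets of \<open>\<nat>\<close>, some \<open>c a \<in> f (y a)\<close>
  is not covered by that smaller ideal. Then \<open>c a \<in> f (y b)\<close> forces \<open>a \<le> b\<close>, and since every
  \<open>f (y b)\<close> is finite, this relation has finite sets of predecessors, so \<open>r\<close> can be labelled
  injectively by naturals increasing along it. Intersecting \<open>r\<close> with the order of the labels gives
  a sierpinskisation \<open>S\<close>, and sending a finitely generated initial segment \<open>D\<close> of \<open>S\<close> to the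
  join of \<open>y\<close> over \<open>D\<close> is a join embedding: \<open>c n\<close> witnesses that \<open>n \<in> D\<close> is not below the
  join over a segment omitting \<open>n\<close>. Finally, in any sierpinskisation of \<open>r\<close> the segments whose
  image in \<open>r\<close> lies inside a given initial segment form an ideal, and these ideals form a chain of
  type \<open>I(\<alpha>)\<close>.
\<close>

lemma Field_incl_rel [simp]: "Field (incl_rel A) = A"
  unfolding incl_rel_def Field_def by auto

lemma in_incl_rel_iff [simp]: "(X,Y) \<in> incl_rel A \<longleftrightarrow> X \<in> A \<and> Y \<in> A \<and> X \<subseteq> Y"
  unfolding incl_rel_def by auto

lemma is_lub_incl_rel_iff:
  assumes "X \<subseteq> A" "\<Union>X \<in> A"
  shows "is_lub (incl_rel A) X D \<longleftrightarrow> D = \<Union>X"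
  using assms unfolding is_lub_def by auto

lemma ord_isoI:
  assumes "bij_betw h (Field L) (Field M)"
    and "\<And>a b. a \<in> Field L \<Longrightarrow> b \<in> Field L \<Longrightarrow> (a,b) \<in> L \<longleftrightarrow> (h a, h b) \<in> M"
  shows "ord_iso L M"
  using assms unfolding ord_iso_def by blast

lemma ord_iso_sym:
  assumes "ord_iso L M" shows "ord_iso M L"
proof -
  obtain h where h: "bij_betw h (Field L) (Field M)"
    and mono: "\<And>a b. a \<in> Field L \<Longrightarrow> b \<in> Field L \<Longrightarrow> (a,b) \<in> L \<longleftrightarrow> (h a, h b) \<in> M"
    using assms unfolding ord_iso_def by blast
  show ?thesis
  proof (rule ord_isoI[OF bij_betw_inv_into[OF h]])
    fix a b assume "a \<in> Field M" "b \<in> Field M"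
    then show "(a,b) \<in> M \<longleftrightarrow> (inv_into (Field L) h a, inv_into (Field L) h b) \<in> L"
      using mono[of "inv_into (Field L) h a" "inv_into (Field L) h b"] h
      by (simp add: bij_betw_inv_into_right bij_betw_imp_surj_on inv_into_into)
  qed
qed

lemma ord_iso_incl_rel:
  assumes "inj_on \<Phi> A" "\<Phi> ` A = B" "\<And>X Y. X \<in> A \<Longrightarrow> Y \<in> A \<Longrightarrow> X \<subseteq> Y \<longleftrightarrow> \<Phi> X \<subseteq> \<Phi> Y"
  shows "ord_iso (incl_rel A) (incl_rel B)"
  using assms by (intro ord_isoI) (auto simp: bij_betw_def)

lemma ord_iso_incl_relE:
  assumes "ord_iso (incl_rel B) (incl_rel A)"
  obtains \<Phi> where "\<Phi> ` A \<subseteq> B" "\<And>X Y. X \<in> A \<Longrightarrow> Y \<in> A \<Longrightarrow> X \<subseteq> Y \<longleftrightarrow> \<Phi> X \<subseteq> \<Phi> Y"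
proof -
  obtain \<Phi> where bij: "bij_betw \<Phi> A B"
    and iff: "\<forall>X\<in>A. \<forall>Y\<in>A. (X,Y) \<in> incl_rel A \<longleftrightarrow> (\<Phi> X, \<Phi> Y) \<in> incl_rel B"
    using ord_iso_sym[OF assms] unfolding ord_iso_def Field_incl_rel by blast
  then have "\<Phi> ` A \<subseteq> B" by (simp add: bij_betw_def)
  moreover have "X \<subseteq> Y \<longleftrightarrow> \<Phi> X \<subseteq> \<Phi> Y" if "X \<in> A" "Y \<in> A" for X Y
    using iff that \<open>\<Phi> ` A \<subseteq> B\<close> by auto
  ultimately show ?thesis using that by blast
qed

lemma join_semilattice_bot_incl_rel:
  assumes "{} \<in> A" "\<And>D E. D \<in> A \<Longrightarrow> E \<in> A \<Longrightarrow> D \<union> E \<in> A"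
  shows "join_semilattice_bot (incl_rel A)"
  unfolding join_semilattice_bot_def Field_incl_rel
proof (intro conjI ballI)
  show "partial_order_on A (incl_rel A)"
    unfolding order_on_defs refl_on_def trans_def antisym_def by (auto simp: incl_rel_def)
  show "\<exists>b\<in>A. \<forall>D\<in>A. (b,D) \<in> incl_rel A" using assms(1) by auto
  fix D E assume "D \<in> A" "E \<in> A"
  then show "\<exists>Z. is_lub (incl_rel A) {D, E} Z"
    using is_lub_incl_rel_iff[of "{D, E}" A] assms(2) by auto
qed

lemma incl_rel_bounded_ideal:
  assumes "{} \<in> A" "\<And>D E. D \<in> A \<Longrightarrow> E \<in> A \<Longrightarrow> D \<union> E \<in> A"
  shows "{D \<in> A. D \<subseteq> Z} \<in> ideals (incl_rel A)"
  unfolding ideals_def Field_incl_rel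
proof (intro CollectI conjI ballI allI impI)
  fix D E assume "D \<in> {D \<in> A. D \<subseteq> Z}" "E \<in> {D \<in> A. D \<subseteq> Z}"
  then show "\<exists>U\<in>{D \<in> A. D \<subseteq> Z}. (D,U) \<in> incl_rel A \<and> (E,U) \<in> incl_rel A"
    using assms(2)[of D E] by (intro bexI[of _ "D \<union> E"]) auto
qed (use assms(1) in auto)

lemma finite_lub_exists:
  assumes P: "join_semilattice_bot P" and "finite X" "X \<subseteq> Field P"
  shows "\<exists>z. is_lub P X z"
  using assms(2,3)
proof (induction X rule: finite_induct)
  case empty
  then show ?case using P unfolding join_semilattice_bot_def is_lub_def by blast
next
  case (insert x X)
  then obtain z where z: "is_lub P X z" by auto
  then obtain w where w: "is_lub P {x, z} w"
    using P insert.prems unfolding join_semilattice_bot_def is_lub_def by blast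
  have "trans P" using P unfolding join_semilattice_bot_def order_on_defs by blast
  then have "is_lub P (insert x X) w"
    using z w insert.prems unfolding is_lub_def trans_def by blast
  then show ?case ..
qed

lemma ideals_subset_Field: "I \<in> ideals P \<Longrightarrow> I \<subseteq> Field P"
  unfolding ideals_def by blast

lemma ideal_finite_upper_bound:
  assumes I: "I \<in> ideals P" and "trans P" "finite F" "F \<subseteq> I"
  shows "\<exists>u\<in>I. \<forall>w\<in>F. (w,u) \<in> P"
  using assms(3,4)
proof (induction F rule: finite_induct)
  case empty
  then show ?case using I unfolding ideals_def by auto
next
  case (insert x F)
  then obtain u where "u \<in> I" "\<forall>w\<in>F. (w,u) \<in> P" by auto
  moreover obtain z where "z \<in> I" "(x,z) \<in> P" "(u,z) \<in> P"
    using I insert.prems \<open>u \<in> I\<close> unfolding ideals_def by blast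
  ultimately show ?case using \<open>trans P\<close> unfolding trans_def by blast
qed

lemma join_embD:
  assumes "join_emb P Q f"
  shows join_emb_into: "f ` Field P \<subseteq> Field Q"
    and join_emb_le_iff: "\<And>x y. x \<in> Field P \<Longrightarrow> y \<in> Field P \<Longrightarrow> (x,y) \<in> P \<longleftrightarrow> (f x, f y) \<in> Q"
    and join_emb_lub: "\<And>X x. finite X \<Longrightarrow> X \<subseteq> Field P \<Longrightarrow> is_lub P X x \<Longrightarrow> is_lub Q (f ` X) (f x)"
  using assms unfolding join_emb_def by blast+

lemma join_emb_reflects_lub:
  assumes f: "join_emb P Q f" and X: "X \<subseteq> Field P" and z: "z \<in> Field P"
    and lub: "is_lub Q (f ` X) (f z)"
  shows "is_lub P X z"
  unfolding is_lub_def
proof (intro conjI ballI impI)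
  fix x assume "x \<in> X"
  then show "(x,z) \<in> P"
    using lub X z join_emb_le_iff[OF f] unfolding is_lub_def by blast
next
  fix w assume w: "w \<in> Field P" "\<forall>x\<in>X. (x,w) \<in> P"
  then have "\<forall>v\<in>f ` X. (v, f w) \<in> Q" using X join_emb_le_iff[OF f] by blast
  then have "(f z, f w) \<in> Q" using lub join_emb_into[OF f] w(1) unfolding is_lub_def by blast
  then show "(z,w) \<in> P" using join_emb_le_iff[OF f] z w(1) by blast
qed (fact z)

lemma join_emb_comp_cancel:
  assumes f: "join_emb P R f" and fg: "join_emb Q R (f \<circ> g)" and g: "g ` Field Q \<subseteq> Field P"
  shows "join_emb Q P g"
  unfolding join_emb_def
proof (intro conjI allI ballI impI)
  fix x y assume xy: "x \<in> Field Q" "y \<in> Field Q"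
  have "(x,y) \<in> Q \<longleftrightarrow> (f (g x), f (g y)) \<in> R"
    using join_emb_le_iff[OF fg] xy by simp
  also have "\<dots> \<longleftrightarrow> (g x, g y) \<in> P"
    using join_emb_le_iff[OF f] g xy by blast
  finally show "(x,y) \<in> Q \<longleftrightarrow> (g x, g y) \<in> P" .
next
  fix X x assume X: "finite X \<and> X \<subseteq> Field Q \<and> is_lub Q X x"
  then have "x \<in> Field Q" unfolding is_lub_def by blast
  have "is_lub R ((f \<circ> g) ` X) ((f \<circ> g) x)"
    using join_emb_lub[OF fg] X by blast
  then have "is_lub R (f ` g ` X) (f (g x))" by (simp add: image_comp)
  moreover have "g ` X \<subseteq> Field P" "g x \<in> Field P" using g X \<open>x \<in> Field Q\<close> by auto
  ultimately show "is_lub P (g ` X) (g x)"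
    using join_emb_reflects_lub[OF f] by blast
qed (fact g)

lemma join_emb_incl_rel:
  assumes union_closed: "\<And>X. finite X \<Longrightarrow> X \<subseteq> A \<Longrightarrow> \<Union>X \<in> A"
    and into: "F ` A \<subseteq> B"
    and le_iff: "\<And>D E. D \<in> A \<Longrightarrow> E \<in> A \<Longrightarrow> F D \<subseteq> F E \<longleftrightarrow> D \<subseteq> E"
    and Union: "\<And>X. finite X \<Longrightarrow> X \<subseteq> A \<Longrightarrow> F (\<Union>X) = \<Union>(F ` X)"
  shows "join_emb (incl_rel A) (incl_rel B) F"
  unfolding join_emb_def Field_incl_rel
proof (intro conjI allI ballI impI)
  fix D E assume "D \<in> A" "E \<in> A"
  then show "(D,E) \<in> incl_rel A \<longleftrightarrow> (F D, F E) \<in> incl_rel B"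
    using le_iff[of D E] into by auto
next
  fix X D assume X: "finite X \<and> X \<subseteq> A \<and> is_lub (incl_rel A) X D"
  then have "D = \<Union>X" using is_lub_incl_rel_iff[of X A D] union_closed[of X] by simp
  moreover have "F ` X \<subseteq> B" "F (\<Union>X) \<in> B" using X union_closed[of X] into by auto
  ultimately show "is_lub (incl_rel B) (F ` X) (F D)"
    using is_lub_incl_rel_iff[of "F ` X" B] Union[of X] X by simp
qed (fact into)

subsection \<open>Join embeddings into the finite subsets of \<open>\<nat>\<close>\<close>

lemma join_emb_fin_finite:
  assumes "join_emb P fin_subsets_nat f" "x \<in> Field P" shows "finite (f x)"
  using assms unfolding join_emb_def fin_subsets_nat_def by auto

lemma join_emb_fin_le_iff:
  assumes "join_emb P fin_subsets_nat f" "x \<in> Field P" "y \<in> Field P"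
  shows "(x,y) \<in> P \<longleftrightarrow> f x \<subseteq> f y"
  using assms join_emb_fin_finite[OF assms(1)] unfolding join_emb_def fin_subsets_nat_def by simp

lemma join_emb_fin_lub:
  assumes f: "join_emb P fin_subsets_nat f" and "finite X" "X \<subseteq> Field P" "is_lub P X z"
  shows "f z = \<Union>(f ` X)"
proof -
  have "is_lub (incl_rel (Collect finite)) (f ` X) (f z)"
    using f assms(2-4) unfolding join_emb_def fin_subsets_nat_def by blast
  moreover have "f ` X \<subseteq> Collect finite" using join_emb_fin_finite[OF f] assms(3) by blast
  ultimately show ?thesis
    using is_lub_incl_rel_iff[of "f ` X" "Collect finite" "f z"] assms(2) by auto
qed

lemma join_emb_fin_ideal_mem:
  assumes f: "join_emb P fin_subsets_nat f" and "trans P" and I: "I \<in> ideals P"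
    and z: "z \<in> Field P" and sub: "f z \<subseteq> \<Union>(f ` I)"
  shows "z \<in> I"
proof -
  have "\<forall>p\<in>f z. \<exists>v\<in>I. p \<in> f v" using sub by blast
  then obtain w where w: "\<And>p. p \<in> f z \<Longrightarrow> w p \<in> I \<and> p \<in> f (w p)" by metis
  obtain u where u: "u \<in> I" "\<forall>v\<in>w ` f z. (v,u) \<in> P"
    using ideal_finite_upper_bound[OF I \<open>trans P\<close>] join_emb_fin_finite[OF f z] w by blast
  have I_sub: "I \<subseteq> Field P" by (rule ideals_subset_Field[OF I])
  have "f z \<subseteq> f u"
  proof
    fix p assume p: "p \<in> f z"
    then have "(w p, u) \<in> P" using u by blast
    then have "f (w p) \<subseteq> f u" using join_emb_fin_le_iff[OF f] w[OF p] u(1) I_sub by blast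
    then show "p \<in> f u" using w[OF p] by blast
  qed
  then have "(z,u) \<in> P" using join_emb_fin_le_iff[OF f z] u I_sub by blast
  then show ?thesis using I u(1) unfolding ideals_def by blast
qed

subsection \<open>Finitely generated initial segments\<close>

definition down_closure :: "'s rel \<Rightarrow> 's set \<Rightarrow> 's set" where
  "down_closure S F = {y \<in> Field S. \<exists>x\<in>F. (y,x) \<in> S}"

definition fg_segs :: "'s rel \<Rightarrow> 's set set" where
  "fg_segs S = down_closure S ` {F. finite F \<and> F \<subseteq> Field S}"

lemma fg_init_segs_eq: "fg_init_segs S = incl_rel (fg_segs S)"
  unfolding fg_init_segs_def fg_segs_def down_closure_def by (simp add: setcompr_eq_image)

lemma Union_in_fg_segs:
  assumes "finite X" "X \<subseteq> fg_segs S"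
  shows "\<Union>X \<in> fg_segs S"
proof -
  have "\<forall>D\<in>X. \<exists>F. finite F \<and> F \<subseteq> Field S \<and> D = down_closure S F"
    using assms(2) unfolding fg_segs_def by blast
  then obtain G where G: "\<And>D. D \<in> X \<Longrightarrow> finite (G D) \<and> G D \<subseteq> Field S \<and> D = down_closure S (G D)"
    by metis
  have "down_closure S (\<Union>(G ` X)) = (\<Union>D\<in>X. down_closure S (G D))"
    unfolding down_closure_def by auto
  also have "\<dots> = \<Union>X" using G by (simp cong: SUP_cong)
  finally have "\<Union>X = down_closure S (\<Union>(G ` X))" ..
  moreover have "finite (\<Union>(G ` X))" "\<Union>(G ` X) \<subseteq> Field S" using G assms(1) by auto
  ultimately show ?thesis unfolding fg_segs_def by blast
qed

lemma empty_in_fg_segs: "{} \<in> fg_segs S"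
  using Union_in_fg_segs[of "{}" S] by simp

lemma Un_in_fg_segs: "D \<in> fg_segs S \<Longrightarrow> E \<in> fg_segs S \<Longrightarrow> D \<union> E \<in> fg_segs S"
  using Union_in_fg_segs[of "{D, E}" S] by simp

lemma fg_segs_subset_Field: "D \<in> fg_segs S \<Longrightarrow> D \<subseteq> Field S"
  unfolding fg_segs_def down_closure_def by blast

lemma fg_segs_down_closed:
  "trans S \<Longrightarrow> D \<in> fg_segs S \<Longrightarrow> n \<in> D \<Longrightarrow> (m,n) \<in> S \<Longrightarrow> m \<in> D"
  unfolding fg_segs_def down_closure_def trans_def by (blast intro: FieldI1)

lemma finite_fg_segs:
  assumes "\<And>n. finite (under S n)" "D \<in> fg_segs S"
  shows "finite D"
proof -
  obtain F where "finite F" "D = down_closure S F"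
    using assms(2) unfolding fg_segs_def by blast
  then have "D \<subseteq> (\<Union>x\<in>F. under S x)" "finite (\<Union>x\<in>F. under S x)"
    using assms(1) unfolding down_closure_def under_def by auto
  then show ?thesis by (rule finite_subset)
qed

lemma down_closure_singleton_in_fg_segs: "n \<in> Field S \<Longrightarrow> down_closure S {n} \<in> fg_segs S"
  unfolding fg_segs_def by blast

subsection \<open>Sierpinskisations\<close>

lemma Field_omega_rel [simp]: "Field omega_rel = UNIV"
  unfolding omega_rel_def Field_def by auto

lemma in_omega_rel_iff [simp]: "(m,n) \<in> omega_rel \<longleftrightarrow> m \<le> n"
  unfolding omega_rel_def by simp

lemma sierpinskisation_Int_le:
  fixes L :: "nat rel"
  assumes L: "Linear_order L" and inf: "infinite (Field L)" and iso: "ord_iso L r"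
  shows "sierpinskisation r (L \<inter> {(m,n). m \<le> n})"
proof -
  define L2 where "L2 = {(m,n). m \<in> Field L \<and> n \<in> Field L \<and> m \<le> n}"
  have F2: "Field L2 = Field L" unfolding L2_def Field_def by auto
  have lin2: "Linear_order L2"
    unfolding order_on_defs F2 unfolding L2_def refl_on_def trans_def antisym_def total_on_def
    by auto
  have "ord_iso omega_rel L2"
  proof (rule ord_isoI)
    show "bij_betw (enumerate (Field L)) (Field omega_rel) (Field L2)"
      using bij_enumerate[OF inf] F2 by simp
    fix a b :: nat
    show "(a,b) \<in> omega_rel \<longleftrightarrow> (enumerate (Field L) a, enumerate (Field L) b) \<in> L2"
      using enumerate_in_set[OF inf] inf unfolding L2_def by simp
  qed
  moreover have "L \<inter> {(m,n). m \<le> n} = L \<inter> L2" unfolding L2_def by (auto intro: FieldI1 FieldI2)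
  ultimately show ?thesis
    unfolding sierpinskisation_def using L lin2 F2 iso ord_iso_sym by metis
qed

lemma Field_Int_Linear_order:
  assumes "Linear_order L1" "Linear_order L2" "Field L1 = Field L2"
  shows "Field (L1 \<inter> L2) = Field L1"
proof -
  have "(a,a) \<in> L1 \<inter> L2" if "a \<in> Field L1" for a
    using assms that unfolding order_on_defs refl_on_def by auto
  then show ?thesis unfolding Field_def by blast
qed

lemma sierpinskisation_Partial_order:
  assumes "sierpinskisation r S" shows "Partial_order S"
proof -
  obtain L1 L2 where L: "Linear_order L1" "Linear_order L2" "Field L1 = Field L2" "S = L1 \<inter> L2"
    using assms unfolding sierpinskisation_def by blast
  then have "Field S = Field L1" using Field_Int_Linear_order by blast
  then show ?thesis
    using L unfolding order_on_defs refl_on_def trans_def antisym_def by (auto intro: FieldI1 FieldI2)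
qed

lemma sierpinskisation_finite_under:
  assumes "sierpinskisation r S" shows "finite (under S n)"
proof -
  obtain L2 where "S \<subseteq> L2" "ord_iso L2 omega_rel"
    using assms unfolding sierpinskisation_def by blast
  then obtain h where h: "bij_betw h (Field L2) (Field omega_rel)"
    and le: "\<forall>a\<in>Field L2. \<forall>b\<in>Field L2. (a,b) \<in> L2 \<longleftrightarrow> (h a, h b) \<in> omega_rel"
    unfolding ord_iso_def by blast
  have "h ` under L2 n \<subseteq> {..h n}"
    using le unfolding under_def by (auto intro: FieldI1 FieldI2)
  moreover have "inj_on h (under L2 n)"
    using h under_Field[of L2 n] unfolding bij_betw_def by (blast intro: inj_on_subset)
  ultimately have "finite (under L2 n)"
    by (metis finite_atMost finite_imageD finite_subset)
  moreover have "under S n \<subseteq> under L2 n" using \<open>S \<subseteq> L2\<close> unfolding under_def by blast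
  ultimately show ?thesis by (rule finite_subset[rotated])
qed

lemma sierpinskisation_init_segs_to_ideals:
  assumes "sierpinskisation r S"
  obtains \<Phi> where "\<And>X. \<Phi> X \<in> ideals (incl_rel (fg_segs S))"
    "\<And>X Y. X \<in> init_segs r \<Longrightarrow> Y \<in> init_segs r \<Longrightarrow> X \<subseteq> Y \<longleftrightarrow> \<Phi> X \<subseteq> \<Phi> Y"
proof -
  obtain L1 L2 where L: "Linear_order L1" "Linear_order L2" "Field L1 = Field L2" "S = L1 \<inter> L2"
    and iso: "ord_iso L1 r"
    using assms unfolding sierpinskisation_def by blast
  have FS: "Field S = Field L1" using L Field_Int_Linear_order by blast
  obtain \<psi> where \<psi>: "bij_betw \<psi> (Field L1) (Field r)"
    and \<psi>_le: "\<And>a b. a \<in> Field L1 \<Longrightarrow> b \<in> Field L1 \<Longrightarrow> (a,b) \<in> L1 \<longleftrightarrow> (\<psi> a, \<psi> b) \<in> r"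
    using iso unfolding ord_iso_def by blast
  define \<Phi> where "\<Phi> X = {D \<in> fg_segs S. D \<subseteq> \<psi> -` X}" for X
  have \<Phi>_ideal: "\<Phi> X \<in> ideals (incl_rel (fg_segs S))" for X
    unfolding \<Phi>_def by (rule incl_rel_bounded_ideal[OF empty_in_fg_segs Un_in_fg_segs])
  have \<Phi>_iff: "X \<subseteq> Y \<longleftrightarrow> \<Phi> X \<subseteq> \<Phi> Y" if X: "X \<in> init_segs r" and "Y \<in> init_segs r" for X Y
  proof
    assume "\<Phi> X \<subseteq> \<Phi> Y"
    show "X \<subseteq> Y"
    proof
      fix a assume a: "a \<in> X"
      then have "a \<in> Field r" using X unfolding init_segs_def by blast
      then have "a \<in> \<psi> ` Field S" using \<psi> FS by (simp add: bij_betw_def)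
      then obtain n where n: "n \<in> Field S" "\<psi> n = a" by blast
      let ?D = "down_closure S {n}"
      have "?D \<subseteq> \<psi> -` X"
      proof
        fix m assume "m \<in> ?D"
        then have "(m,n) \<in> L1" "m \<in> Field L1" using L(4) FS unfolding down_closure_def by blast+
        then have "(\<psi> m, a) \<in> r" using \<psi>_le[of m n] n FS by simp
        then show "m \<in> \<psi> -` X" using X a unfolding init_segs_def by blast
      qed
      then have "?D \<in> \<Phi> Y"
        using \<open>\<Phi> X \<subseteq> \<Phi> Y\<close> down_closure_singleton_in_fg_segs[OF n(1)] unfolding \<Phi>_def by blast
      moreover have "(n,n) \<in> S"
        using n(1) sierpinskisation_Partial_order[OF assms] unfolding order_on_defs refl_on_def by blast
      then have "n \<in> ?D" using n(1) unfolding down_closure_def by blast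
      ultimately show "a \<in> Y" using n(2) unfolding \<Phi>_def by blast
    qed
  next
    assume "X \<subseteq> Y" then show "\<Phi> X \<subseteq> \<Phi> Y" unfolding \<Phi>_def by blast
  qed
  show ?thesis by (rule that[OF \<Phi>_ideal \<Phi>_iff])
qed

lemma J_alpha_fg_init_segs:
  assumes "sierpinskisation r S" shows "J_alpha r (fg_init_segs S)"
proof -
  obtain \<Phi> where \<Phi>_ideal: "\<And>X. \<Phi> X \<in> ideals (incl_rel (fg_segs S))"
    and \<Phi>_iff: "\<And>X Y. X \<in> init_segs r \<Longrightarrow> Y \<in> init_segs r \<Longrightarrow> X \<subseteq> Y \<longleftrightarrow> \<Phi> X \<subseteq> \<Phi> Y"
    using sierpinskisation_init_segs_to_ideals[OF assms] by blast
  have "inj_on \<Phi> (init_segs r)"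
  proof (rule inj_onI)
    fix X Y assume "X \<in> init_segs r" "Y \<in> init_segs r" "\<Phi> X = \<Phi> Y"
    then show "X = Y" using \<Phi>_iff[of X Y] \<Phi>_iff[of Y X] by blast
  qed
  then have "ord_iso (incl_rel (init_segs r)) (incl_rel (\<Phi> ` init_segs r))"
    by (rule ord_iso_incl_rel[OF _ refl \<Phi>_iff])
  then have "ord_iso (incl_rel (\<Phi> ` init_segs r)) (incl_rel (init_segs r))"
    by (rule ord_iso_sym)
  moreover have "\<Phi> ` init_segs r \<subseteq> ideals (incl_rel (fg_segs S))" using \<Phi>_ideal by blast
  moreover have "join_semilattice_bot (incl_rel (fg_segs S))"
    by (rule join_semilattice_bot_incl_rel[OF empty_in_fg_segs Un_in_fg_segs])
  ultimately show ?thesis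
    unfolding J_alpha_def fg_init_segs_eq by blast
qed

lemma finite_rtrancl_preds:
  assumes "wf R" "\<And>a. finite {b. (b,a) \<in> R}"
  shows "finite {b. (b,a) \<in> R\<^sup>*}"
  using assms(1)
proof (induction a rule: wf_induct_rule)
  case (less a)
  have "{b. (b,a) \<in> R\<^sup>*} = insert a (\<Union>c\<in>{c. (c,a) \<in> R}. {b. (b,c) \<in> R\<^sup>*})"
    by (auto elim: rtranclE intro: rtrancl_into_rtrancl)
  then show ?case using less assms(2)[of a] by auto
qed

lemma set_encode_strict_mono:
  assumes "finite B" "A \<subset> B" shows "set_encode A < set_encode B"
proof -
  obtain x where "x \<in> B - A" using assms(2) by blast
  then show ?thesis
    unfolding set_encode_def using sum_strict_mono2[of B A x "(^) (2::nat)"] assms by auto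
qed

lemma wf_nat_labelling:
  assumes wf: "wf R" and "countable A" and R: "R \<subseteq> A \<times> A"
    and fin: "\<And>a. a \<in> A \<Longrightarrow> finite {b. (b,a) \<in> R}"
  obtains k :: "'a \<Rightarrow> nat" where "inj_on k A" "\<And>a b. (a,b) \<in> R \<Longrightarrow> k a < k b"
proof -
  define T where "T a = {b. (b,a) \<in> R\<^sup>*}" for a
  have "finite {b. (b,a) \<in> R}" for a
  proof (cases "a \<in> A")
    case False
    then have "{b. (b,a) \<in> R} = {}" using R by blast
    then show ?thesis by simp
  qed (rule fin)
  then have T_fin: "finite (T a)" for a
    unfolding T_def using finite_rtrancl_preds[OF wf] by blast
  have T_sub: "T a \<subseteq> A" if "a \<in> A" for a
    unfolding T_def using that R by (auto elim: converse_rtranclE)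
  have anti: "antisym (R\<^sup>*)"
    using acyclic_impl_antisym_rtrancl[OF wf_acyclic[OF wf]] .
  define e where "e = to_nat_on A"
  have e: "inj_on e A" unfolding e_def using \<open>countable A\<close> by blast
  \<comment> \<open>\<open>k a\<close> codes the finite set of \<open>R\<^sup>*\<close>-predecessors of \<open>a\<close>, which grows strictly along \<open>R\<close>.\<close>
  define k where "k a = set_encode (e ` T a)" for a
  show ?thesis
  proof
    show "inj_on k A"
    proof (rule inj_onI)
      fix a b assume ab: "a \<in> A" "b \<in> A" "k a = k b"
      then have "e ` T a = e ` T b" using T_fin unfolding k_def by (simp add: set_encode_eq)
      then have "T a = T b" using inj_on_image_eq_iff[OF e T_sub T_sub] ab by blast
      then show "a = b" using anti unfolding T_def antisym_def by blast
    qed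
  next
    fix a b assume ab: "(a,b) \<in> R"
    then have "a \<in> A" "b \<in> A" using R by auto
    have "T a \<subseteq> T b" unfolding T_def using ab by (auto intro: rtrancl_into_rtrancl)
    moreover have "b \<notin> T a"
      using anti ab wf_not_refl[OF wf, of a] unfolding T_def antisym_def by blast
    moreover have "b \<in> T b" unfolding T_def by blast
    moreover have "e b \<notin> e ` T a"
      using inj_on_image_mem_iff[OF e \<open>b \<in> A\<close> T_sub[OF \<open>a \<in> A\<close>]] \<open>b \<notin> T a\<close> by simp
    ultimately have "e ` T a \<subset> e ` T b" by blast
    then show "k a < k b" unfolding k_def by (rule set_encode_strict_mono[OF finite_imageI[OF T_fin]])
  qed
qed

lemma ord_iso_dir_image:
  assumes k: "inj_on k (Field r)" shows "ord_iso r (dir_image r k)"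
proof (rule ord_isoI)
  show "bij_betw k (Field r) (Field (dir_image r k))"
    using k by (simp add: bij_betw_def dir_image_Field)
  fix a b assume ab: "a \<in> Field r" "b \<in> Field r"
  show "(a,b) \<in> r \<longleftrightarrow> (k a, k b) \<in> dir_image r k"
  proof
    assume "(k a, k b) \<in> dir_image r k"
    then obtain a' b' where ab': "(a',b') \<in> r" "k a = k a'" "k b = k b'"
      unfolding dir_image_def by blast
    then have "a' \<in> Field r" "b' \<in> Field r" by (auto intro: FieldI1 FieldI2)
    then have "a = a'" "b = b'" using inj_onD[OF k] ab ab' by blast+
    then show "(a,b) \<in> r" using ab' by simp
  qed (auto simp: dir_image_def)
qed

lemma sierpinskisation_extending:
  assumes wo: "Well_order r" and "countable (Field r)" "infinite (Field r)"
    and "R \<subseteq> r" and fin: "\<And>a. a \<in> Field r \<Longrightarrow> finite {b. (b,a) \<in> R}"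
  obtains S :: "nat rel" and h where "sierpinskisation r S" "bij_betw h (Field r) (Field S)"
    "\<And>a b. (a,b) \<in> R \<Longrightarrow> (h a, h b) \<in> S"
proof -
  have "wf (r - Id)" using wo by (simp add: well_order_on_def)
  then have wf: "wf (R - Id)" by (rule wf_subset) (use \<open>R \<subseteq> r\<close> in blast)
  have R: "R - Id \<subseteq> Field r \<times> Field r" using \<open>R \<subseteq> r\<close> by (auto intro: FieldI1 FieldI2)
  have "finite {b. (b,a) \<in> R - Id}" if "a \<in> Field r" for a
    using fin[OF that] by (rule finite_subset[rotated]) auto
  then obtain k :: "'a \<Rightarrow> nat"
    where k: "inj_on k (Field r)" "\<And>a b. (a,b) \<in> R - Id \<Longrightarrow> k a < k b"
    using wf_nat_labelling[OF wf \<open>countable (Field r)\<close> R] by blast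
  define L where "L = dir_image r k"
  have linL: "Linear_order L"
    unfolding L_def using wo by (intro Linear_order_dir_image[OF _ k(1)]) (simp add: well_order_on_def)
  have FL: "Field L = k ` Field r" unfolding L_def by (rule dir_image_Field)
  have L_refl: "(n,n) \<in> L" if "n \<in> Field L" for n
    using linL that unfolding order_on_defs refl_on_def by blast
  define S where "S = L \<inter> {(m,n). m \<le> n}"
  show ?thesis
  proof
    have "infinite (Field L)" using FL k(1) \<open>infinite (Field r)\<close> by (simp add: finite_image_iff)
    then show "sierpinskisation r S"
      unfolding S_def L_def
      by (rule sierpinskisation_Int_le[OF linL[unfolded L_def] _ ord_iso_sym[OF ord_iso_dir_image[OF k(1)]]])
    have "Field L \<subseteq> Field S" using L_refl unfolding S_def by (blast intro: FieldI1)
    moreover have "Field S \<subseteq> Field L" unfolding S_def Field_def by blast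
    ultimately have "Field S = Field L" by (rule subset_antisym[rotated])
    then show "bij_betw k (Field r) (Field S)" using FL k(1) by (simp add: bij_betw_def)
  next
    fix a b assume ab: "(a,b) \<in> R"
    then have "(k a, k b) \<in> L" using \<open>R \<subseteq> r\<close> unfolding L_def dir_image_def by blast
    moreover have "k a \<le> k b" using k(2)[of a b] ab by (cases "a = b") auto
    ultimately show "(k a, k b) \<in> S" unfolding S_def by blast
  qed
qed

lemma under_in_init_segs:
  assumes "trans r" shows "under r a \<in> init_segs r"
  unfolding init_segs_def
proof (intro CollectI conjI ballI allI impI)
  fix x z assume "x \<in> under r a" "(z,x) \<in> r"
  then show "z \<in> under r a" using assms unfolding under_def trans_def by blast
qed (rule under_Field)

lemma underS_in_init_segs:
  assumes "trans r" "antisym r" shows "underS r a \<in> init_segs r"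
  unfolding init_segs_def
proof (intro CollectI conjI ballI allI impI)
  fix x z assume x: "x \<in> underS r a" and zx: "(z,x) \<in> r"
  then have "(z,a) \<in> r" using assms(1) unfolding underS_def trans_def by blast
  moreover have "z \<noteq> a" using x zx assms(2) unfolding underS_def antisym_def by blast
  ultimately show "z \<in> underS r a" unfolding underS_def by blast
qed (auto simp: underS_def intro: FieldI1)

lemma J_alpha_ideal_chain:
  assumes "J_alpha r P"
  obtains H where "\<And>X. X \<in> init_segs r \<Longrightarrow> H X \<in> ideals P"
    "\<And>X Y. X \<in> init_segs r \<Longrightarrow> Y \<in> init_segs r \<Longrightarrow> X \<subseteq> Y \<longleftrightarrow> H X \<subseteq> H Y"
proof -
  obtain C where C: "C \<subseteq> ideals P" and iso: "ord_iso (incl_rel C) (incl_rel (init_segs r))"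
    using assms unfolding J_alpha_def by blast
  obtain H where H_into: "H ` init_segs r \<subseteq> C"
    and H_iff: "\<And>X Y. X \<in> init_segs r \<Longrightarrow> Y \<in> init_segs r \<Longrightarrow> X \<subseteq> Y \<longleftrightarrow> H X \<subseteq> H Y"
    using ord_iso_incl_relE[OF iso] by blast
  show ?thesis
  proof (rule that)
    fix X assume "X \<in> init_segs r"
    then show "H X \<in> ideals P" using H_into C by blast
  qed (fact H_iff)
qed

lemma separating_family:
  assumes lin: "Linear_order r" and J: "J_alpha r P" and f: "join_emb P fin_subsets_nat f"
  obtains y c where "\<And>a. a \<in> Field r \<Longrightarrow> y a \<in> Field P" "\<And>a. a \<in> Field r \<Longrightarrow> c a \<in> f (y a)"
    "\<And>a b. a \<in> Field r \<Longrightarrow> b \<in> Field r \<Longrightarrow> c a \<in> f (y b) \<Longrightarrow> (a,b) \<in> r"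
proof -
  have "trans P" using J unfolding J_alpha_def join_semilattice_bot_def order_on_defs by simp
  have rfl: "Refl r" and tr: "trans r" and anti: "antisym r" and tot: "Total r"
    using lin by (simp_all add: order_on_defs)
  obtain H where H_ideal: "\<And>X. X \<in> init_segs r \<Longrightarrow> H X \<in> ideals P"
    and H_iff: "\<And>X Y. X \<in> init_segs r \<Longrightarrow> Y \<in> init_segs r \<Longrightarrow> X \<subseteq> Y \<longleftrightarrow> H X \<subseteq> H Y"
    using J_alpha_ideal_chain[OF J] by blast
  note under_seg = under_in_init_segs[OF tr] and underS_seg = underS_in_init_segs[OF tr anti]
  have "\<exists>z p. z \<in> H (under r a) \<and> z \<notin> H (underS r a) \<and> p \<in> f z \<and> p \<notin> \<Union>(f ` H (underS r a))"
    if a: "a \<in> Field r" for a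
  proof -
    have "\<not> under r a \<subseteq> underS r a" using Refl_under_in[OF rfl a] underS_notIn[of a r] by blast
    then have "\<not> H (under r a) \<subseteq> H (underS r a)" using H_iff[OF under_seg underS_seg] by simp
    then obtain z where z: "z \<in> H (under r a)" "z \<notin> H (underS r a)" by blast
    then have "z \<in> Field P" using ideals_subset_Field[OF H_ideal[OF under_seg]] by blast
    then have "\<not> f z \<subseteq> \<Union>(f ` H (underS r a))"
      using join_emb_fin_ideal_mem[OF f \<open>trans P\<close> H_ideal[OF underS_seg]] z(2) by blast
    then show ?thesis using z by blast
  qed
  then obtain y c where yc: "\<And>a. a \<in> Field r \<Longrightarrow> y a \<in> H (under r a) \<and> y a \<notin> H (underS r a) \<and>
      c a \<in> f (y a) \<and> c a \<notin> \<Union>(f ` H (underS r a))"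
    by metis
  show ?thesis
  proof
    fix a assume a: "a \<in> Field r"
    show "y a \<in> Field P" using yc[OF a] ideals_subset_Field[OF H_ideal[OF under_seg]] by blast
    show "c a \<in> f (y a)" using yc[OF a] by blast
  next
    fix a b assume a: "a \<in> Field r" and b: "b \<in> Field r" and ab: "c a \<in> f (y b)"
    show "(a,b) \<in> r"
    proof (rule ccontr)
      assume ab_r: "(a,b) \<notin> r"
      moreover have "a \<noteq> b" using ab_r rfl a unfolding refl_on_def by blast
      ultimately have "(b,a) \<in> r" using tot a b unfolding total_on_def by blast
      then have "under r b \<subseteq> underS r a"
        using tr ab_r unfolding under_def underS_def trans_def by blast
      then have "H (under r b) \<subseteq> H (underS r a)" using H_iff[OF under_seg underS_seg] by simp
      then have "y b \<in> H (underS r a)" using yc[OF b] by blast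
      then show False using yc[OF a] ab by blast
    qed
  qed
qed

lemma nat_sierpinskisation_separating_family:
  assumes wo: "Well_order r" and "countable (Field r)" "infinite (Field r)"
    and J: "J_alpha r P" and f: "join_emb P fin_subsets_nat f"
  obtains S :: "nat rel" and y' c' where "sierpinskisation r S"
    "\<And>n. n \<in> Field S \<Longrightarrow> y' n \<in> Field P" "\<And>n. n \<in> Field S \<Longrightarrow> c' n \<in> f (y' n)"
    "\<And>n m. n \<in> Field S \<Longrightarrow> m \<in> Field S \<Longrightarrow> c' n \<in> f (y' m) \<Longrightarrow> (n,m) \<in> S"
proof -
  have lin: "Linear_order r" using wo by (simp add: well_order_on_def)
  obtain y c where y: "\<And>a. a \<in> Field r \<Longrightarrow> y a \<in> Field P" and c: "\<And>a. a \<in> Field r \<Longrightarrow> c a \<in> f (y a)"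
    and sep: "\<And>a b. a \<in> Field r \<Longrightarrow> b \<in> Field r \<Longrightarrow> c a \<in> f (y b) \<Longrightarrow> (a,b) \<in> r"
    using separating_family[OF lin J f] by blast
  define R where "R = {(a,b). a \<in> Field r \<and> b \<in> Field r \<and> c a \<in> f (y b)}"
  have "R \<subseteq> r" using sep unfolding R_def by blast
  have "antisym r" using wo by (simp add: order_on_defs)
  then have c_inj: "inj_on c (Field r)"
    by (intro inj_onI) (metis sep c antisymD)
  have R_fin: "finite {a. (a,b) \<in> R}" if "b \<in> Field r" for b
  proof (rule finite_subset)
    show "{a. (a,b) \<in> R} \<subseteq> c -` f (y b) \<inter> Field r" unfolding R_def by auto
    show "finite (c -` f (y b) \<inter> Field r)"
      by (rule finite_vimage_IntI[OF join_emb_fin_finite[OF f y[OF that]] c_inj])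
  qed
  obtain S :: "nat rel" and h where S: "sierpinskisation r S" and h: "bij_betw h (Field r) (Field S)"
    and hR: "\<And>a b. (a,b) \<in> R \<Longrightarrow> (h a, h b) \<in> S"
    using sierpinskisation_extending[OF assms(1-3) \<open>R \<subseteq> r\<close> R_fin] by blast
  let ?h' = "inv_into (Field r) h"
  have h': "?h' n \<in> Field r" "h (?h' n) = n" if "n \<in> Field S" for n
    using bij_betwE[OF bij_betw_inv_into[OF h]] bij_betw_inv_into_right[OF h] that by blast+
  show ?thesis
  proof (rule that[OF S, of "y \<circ> ?h'" "c \<circ> ?h'"])
    fix n m assume n: "n \<in> Field S"
    show "(y \<circ> ?h') n \<in> Field P" "(c \<circ> ?h') n \<in> f ((y \<circ> ?h') n)" using y c h'(1)[OF n] by auto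
    assume m: "m \<in> Field S" and "(c \<circ> ?h') n \<in> f ((y \<circ> ?h') m)"
    then have "(?h' n, ?h' m) \<in> R" using h'(1) n unfolding R_def by simp
    then show "(n,m) \<in> S" using hR h'(2) n m by metis
  qed
qed

lemma UN_fg_segs_subset_iff:
  assumes "trans S" and D: "D \<in> fg_segs S" and E: "E \<in> fg_segs S"
    and c: "\<And>n. n \<in> Field S \<Longrightarrow> c n \<in> F n"
    and sep: "\<And>n m. n \<in> Field S \<Longrightarrow> m \<in> Field S \<Longrightarrow> c n \<in> F m \<Longrightarrow> (n,m) \<in> S"
  shows "(\<Union>n\<in>D. F n) \<subseteq> (\<Union>n\<in>E. F n) \<longleftrightarrow> D \<subseteq> E"
proof
  assume sub: "(\<Union>n\<in>D. F n) \<subseteq> (\<Union>n\<in>E. F n)"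
  show "D \<subseteq> E"
  proof
    fix n assume n: "n \<in> D"
    then have "n \<in> Field S" using D fg_segs_subset_Field by blast
    then have "c n \<in> (\<Union>m\<in>E. F m)" using sub c n by blast
    then obtain m where "m \<in> E" "c n \<in> F m" by blast
    then have "(n,m) \<in> S" using sep \<open>n \<in> Field S\<close> E fg_segs_subset_Field by blast
    then show "n \<in> E" using fg_segs_down_closed[OF \<open>trans S\<close> E \<open>m \<in> E\<close>] by blast
  qed
qed blast

lemma join_emb_fg_init_segs:
  assumes P: "join_semilattice_bot P" and f: "join_emb P fin_subsets_nat f"
    and S: "trans S" "\<And>n. finite (under S n)"
    and y: "\<And>n. n \<in> Field S \<Longrightarrow> y n \<in> Field P" and c: "\<And>n. n \<in> Field S \<Longrightarrow> c n \<in> f (y n)"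
    and sep: "\<And>n m. n \<in> Field S \<Longrightarrow> m \<in> Field S \<Longrightarrow> c n \<in> f (y m) \<Longrightarrow> (n,m) \<in> S"
  shows "\<exists>g. join_emb (fg_init_segs S) P g"
proof -
  define g where "g D = (SOME z. is_lub P (y ` D) z)" for D
  have y_fin: "finite (y ` D)" "y ` D \<subseteq> Field P" if "D \<in> fg_segs S" for D
    using that finite_fg_segs[OF S(2)] fg_segs_subset_Field y by blast+
  have g_lub: "is_lub P (y ` D) (g D)" if "D \<in> fg_segs S" for D
    unfolding g_def using finite_lub_exists[OF P y_fin[OF that]] by (rule someI_ex)
  then have g_Field: "g ` fg_segs S \<subseteq> Field P" unfolding is_lub_def by blast
  have fg: "(f \<circ> g) D = (\<Union>n\<in>D. f (y n))" if "D \<in> fg_segs S" for D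
    using join_emb_fin_lub[OF f y_fin[OF that] g_lub[OF that]] by simp
  have emb: "join_emb (incl_rel (fg_segs S)) fin_subsets_nat (f \<circ> g)"
    unfolding fin_subsets_nat_def
  proof (rule join_emb_incl_rel)
    show "(f \<circ> g) ` fg_segs S \<subseteq> Collect finite"
      using g_Field join_emb_fin_finite[OF f] by auto
  next
    fix D E assume D: "D \<in> fg_segs S" and E: "E \<in> fg_segs S"
    show "(f \<circ> g) D \<subseteq> (f \<circ> g) E \<longleftrightarrow> D \<subseteq> E"
      unfolding fg[OF D] fg[OF E] by (rule UN_fg_segs_subset_iff[OF S(1) D E c sep])
  next
    fix X assume X: "finite X" "X \<subseteq> fg_segs S"
    have "(f \<circ> g) (\<Union>X) = (\<Union>D\<in>X. \<Union>n\<in>D. f (y n))" using fg[OF Union_in_fg_segs[OF X]] by simp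
    also have "\<dots> = (\<Union>D\<in>X. (f \<circ> g) D)" using fg X(2) by (intro SUP_cong) auto
    finally show "(f \<circ> g) (\<Union>X) = \<Union>((f \<circ> g) ` X)" .
  qed (rule Union_in_fg_segs)
  have "join_emb (incl_rel (fg_segs S)) P g"
    by (rule join_emb_comp_cancel[OF f emb]) (use g_Field in simp)
  then show ?thesis unfolding fg_init_segs_eq by blast
qed

theorem theorem2p5:
  fixes r :: "'a rel" and P :: "'p rel"
  assumes "Well_order r" and "countable (Field r)" and "infinite (Field r)"
    and "J_alpha r P"
    and "\<exists>f. join_emb P fin_subsets_nat f"
  shows "\<exists>S :: nat rel. sierpinskisation r S \<and> J_alpha r (fg_init_segs S) \<and>
           (\<exists>g. join_emb (fg_init_segs S) P g)"
proof -
  obtain f where f: "join_emb P fin_subsets_nat f" using assms(5) by blast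
  obtain S :: "nat rel" and y c where S: "sierpinskisation r S"
    and y: "\<And>n. n \<in> Field S \<Longrightarrow> y n \<in> Field P" and c: "\<And>n. n \<in> Field S \<Longrightarrow> c n \<in> f (y n)"
    and sep: "\<And>n m. n \<in> Field S \<Longrightarrow> m \<in> Field S \<Longrightarrow> c n \<in> f (y m) \<Longrightarrow> (n,m) \<in> S"
    using nat_sierpinskisation_separating_family[OF assms(1-4) f] by blast
  have P: "join_semilattice_bot P" using assms(4) unfolding J_alpha_def by blast
  have "trans S" using sierpinskisation_Partial_order[OF S] by (simp add: order_on_defs)
  then have "\<exists>g. join_emb (fg_init_segs S) P g"
    by (rule join_emb_fg_init_segs[OF P f _ sierpinskisation_finite_under[OF S] y c sep])
  then show ?thesis using S J_alpha_fg_init_segs[OF S] by blast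
qed

end
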